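(* Let $K\ge 2$, $\theta_t\in\mathbb{R}^d$, step size $\eta>0$, and positive integers $b_1,\dots,b_K$ with $b=\sum_{k=1}^K b_k$. Suppose the standing assumptions below hold, and that at $\theta_t$ the task gradients are $\underline{c}$-conflicted and $\bar c$-aligned for some constants $\underline{c},\bar c\ge 0$ with $$\underline{c}<\frac{1}{K-2+b/b_k}\quad\text{for all }k.$$ Form the Mix-batch gradient $$g_t=\frac1b\sum_{k=1}^K\sum_{i=1}^{b_k}\nabla\ell_k(\theta_t;x_{k,i}),$$ where the samples $x_{k,i}\sim\mathcal D_k$ are drawn independently of each other (and of the past), and set $\theta_{t+1}=\theta_t-\eta g_t$. Then, with the expectation taken over the sampling of the batch (conditionally on $\theta_t$), $$\mathbb{E}[\mathcal L(\theta_{t+1})\mid\theta_t]\le \mathcal L(\theta_t)+\sum_{k=1}^K b_k\Big(-\frac{\eta}{b}\beta\|\nabla\mathcal L_k(\theta_t)\|^2+\frac{L\eta^2}{2b^2}\sigma_k^2\Big)+\sum_{k=1}^K b_k^2\,\frac{L\eta^2}{2b^2}\,\gamma\,\|\nabla\mathcal L_k(\theta_t)\|^2,$$ where $\beta:=\min_k\big(1+\underline{c}(-K+2-\tfrac{b}{b_k})\big)\ge 0$ and $\gamma:=1+\bar c(K-1)$.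
   Context: There are $K$ tasks; task $k$ has a data distribution $\mathcal D_k$ on $\mathbb{R}^{d_x}$ and a loss $\ell_k:\mathbb{R}^d\times\mathbb{R}^{d_x}\to\mathbb{R}$, differentiable in $\theta$. Define $\mathcal L_k(\theta)=\mathbb{E}_{x\sim\mathcal D_k}[\ell_k(\theta;x)]$ and $\mathcal L(\theta)=\sum_{k=1}^K\mathcal L_k(\theta)$. Standing assumptions: $\nabla\mathcal L$ is $L$-Lipschitz (and each $\nabla\mathcal L_k$ is $L$-Lipschitz); for all $\theta$ and $k$, $\mathbb{E}_{x\sim\mathcal D_k}[\nabla\ell_k(\theta;x)]=\nabla\mathcal L_k(\theta)$ and $\mathbb{E}_{x\sim\mathcal D_k}\|\nabla\ell_k(\theta;x)-\nabla\mathcal L_k(\theta)\|^2\le\sigma_k^2$. Norms are Euclidean. The gradients at $\theta$ are $\underline{c}$-conflicted ($\underline c\ge0$) if for all $j\neq k$: $\langle\nabla\mathcal L_j(\theta),\nabla\mathcal L_k(\theta)\rangle\ge-\underline{c}\big(\|\nabla\mathcal L_j(\theta)\|^2+\|\nabla\mathcal L_k(\theta)\|^2\big)$. They are $\bar c$-aligned ($\bar c\ge0$) if for all $j\ne k$: $\langle\nabla\mathcal L_j(\theta),\nabla\mathcal L_k(\theta)\rangle\le\bar c\,\|\nabla\mathcal L_j(\theta)\|\,\|\nabla\mathcal L_k(\theta)\|$. *)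

theory Defs
  imports "HOL-Probability.Probability"
begin

definition task_loss :: "(nat \<Rightarrow> 'x measure) \<Rightarrow> (nat \<Rightarrow> 'a \<Rightarrow> 'x \<Rightarrow> real) \<Rightarrow> nat \<Rightarrow> 'a \<Rightarrow> real" where
  "task_loss D l k \<theta> = (\<integral>x. l k \<theta> x \<partial>(D k))"

definition total_loss :: "nat \<Rightarrow> (nat \<Rightarrow> 'x measure) \<Rightarrow> (nat \<Rightarrow> 'a \<Rightarrow> 'x \<Rightarrow> real) \<Rightarrow> 'a \<Rightarrow> real" where
  "total_loss K D l \<theta> = (\<Sum>k<K. task_loss D l k \<theta>)"

definition batch_index :: "nat \<Rightarrow> (nat \<Rightarrow> nat) \<Rightarrow> (nat \<times> nat) set" where
  "batch_index K b = {(k, i). k < K \<and> i < b k}"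

definition batch_measure :: "nat \<Rightarrow> (nat \<Rightarrow> nat) \<Rightarrow> (nat \<Rightarrow> 'x measure) \<Rightarrow> (nat \<times> nat \<Rightarrow> 'x) measure" where
  "batch_measure K b D = PiM (batch_index K b) (\<lambda>(k, i). D k)"

definition mix_batch_grad :: "nat \<Rightarrow> (nat \<Rightarrow> nat) \<Rightarrow> (nat \<Rightarrow> 'a \<Rightarrow> 'x \<Rightarrow> 'a::real_vector) \<Rightarrow> 'a \<Rightarrow> (nat \<times> nat \<Rightarrow> 'x) \<Rightarrow> 'a" where
  "mix_batch_grad K b gl \<theta> \<omega> =
     (1 / real (\<Sum>k<K. b k)) *\<^sub>R (\<Sum>k<K. \<Sum>i<b k. gl k \<theta> (\<omega> (k, i)))"

end

theory Submission
  imports Defs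
begin

text \<open>
  By the descent lemma for the L-smooth total loss,
  \<open>\<L>(\<theta> - \<eta> g) \<le> \<L>(\<theta>) - \<eta> \<langle>\<nabla>\<L>(\<theta>), g\<rangle> + L \<eta>\<^sup>2 \<parallel>g\<parallel>\<^sup>2 / 2\<close>, so only the first two
  moments of the Mix-batch gradient matter. Writing each sample gradient as its mean plus
  centred noise, independence of the samples kills all cross terms:
  \<open>b E g = v := \<Sum>\<^sub>k b\<^sub>k \<nabla>\<L>\<^sub>k\<close> and \<open>b\<^sup>2 E\<parallel>g\<parallel>\<^sup>2 = \<parallel>v\<parallel>\<^sup>2 + \<Sum>\<^sub>k b\<^sub>k Var\<^sub>k \<le> \<parallel>v\<parallel>\<^sup>2 + \<Sum>\<^sub>k b\<^sub>k \<sigma>\<^sub>k\<^sup>2\<close>.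
  Two deterministic estimates on the task gradients finish the proof: bounding every
  off-diagonal inner product from below by conflictedness gives
  \<open>\<langle>\<Sum>\<^sub>j \<nabla>\<L>\<^sub>j, v\<rangle> \<ge> \<beta> \<Sum>\<^sub>k b\<^sub>k \<parallel>\<nabla>\<L>\<^sub>k\<parallel>\<^sup>2\<close>, and bounding it from above by alignment
  together with \<open>2xy \<le> x\<^sup>2 + y\<^sup>2\<close> gives \<open>\<parallel>v\<parallel>\<^sup>2 \<le> \<gamma> \<Sum>\<^sub>k b\<^sub>k\<^sup>2 \<parallel>\<nabla>\<L>\<^sub>k\<parallel>\<^sup>2\<close>.
\<close>

lemma descent_lemma:
  fixes f :: "'a::real_inner \<Rightarrow> real" and Df :: "'a \<Rightarrow> 'a"
  assumes deriv: "\<And>u. (f has_derivative (\<lambda>h. Df u \<bullet> h)) (at u)"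
    and lip: "\<And>u v. norm (Df u - Df v) \<le> L * norm (u - v)"
  shows "f y \<le> f x + Df x \<bullet> (y - x) + L / 2 * (norm (y - x))\<^sup>2"
proof -
  define h where "h = y - x"
  define \<psi> where "\<psi> t = f (x + t *\<^sub>R h) - t * (Df x \<bullet> h) - L / 2 * t\<^sup>2 * (norm h)\<^sup>2" for t
  define \<psi>' where "\<psi>' t = (Df (x + t *\<^sub>R h) - Df x) \<bullet> h - L * t * (norm h)\<^sup>2" for t
  have \<psi>_deriv: "(\<psi> has_real_derivative \<psi>' t) (at t)" for t
  proof -
    have "((\<lambda>t. x + t *\<^sub>R h) has_derivative (\<lambda>r. r *\<^sub>R h)) (at t)"
      by (auto intro!: derivative_eq_intros)
    from has_derivative_compose[OF this deriv]
    have f_deriv: "((\<lambda>t. f (x + t *\<^sub>R h)) has_real_derivative (Df (x + t *\<^sub>R h) \<bullet> h)) (at t)"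
      by (simp add: has_field_derivative_def mult.commute[of _ "Df (x + t *\<^sub>R h) \<bullet> h"])
    show ?thesis unfolding \<psi>_def \<psi>'_def
      by (rule derivative_eq_intros f_deriv refl)+ (simp add: algebra_simps power2_eq_square)
  qed
  have \<psi>'_nonpos: "\<psi>' t \<le> 0" if "0 \<le> t" for t
  proof -
    have "(Df (x + t *\<^sub>R h) - Df x) \<bullet> h \<le> norm (Df (x + t *\<^sub>R h) - Df x) * norm h"
      by (rule norm_cauchy_schwarz)
    also have "\<dots> \<le> L * norm (t *\<^sub>R h) * norm h"
      using lip[of "x + t *\<^sub>R h" x] by (intro mult_right_mono) auto
    also have "\<dots> = L * t * (norm h)\<^sup>2"
      using that by (simp add: power2_eq_square)
    finally show ?thesis unfolding \<psi>'_def by simp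
  qed
  obtain t where "0 < t" "\<psi> 1 - \<psi> 0 = \<psi>' t"
    using MVT2[of 0 1 \<psi> \<psi>'] \<psi>_deriv by auto
  with \<psi>'_nonpos[of t] have "\<psi> 1 \<le> \<psi> 0" by simp
  then show ?thesis unfolding \<psi>_def h_def by (simp add: algebra_simps)
qed

lemma abs_descent_lemma:
  fixes f :: "'a::real_inner \<Rightarrow> real" and Df :: "'a \<Rightarrow> 'a"
  assumes deriv: "\<And>u. (f has_derivative (\<lambda>h. Df u \<bullet> h)) (at u)"
    and lip: "\<And>u v. norm (Df u - Df v) \<le> L * norm (u - v)"
  shows "\<bar>f y - f x - Df x \<bullet> (y - x)\<bar> \<le> L / 2 * (norm (y - x))\<^sup>2"
proof -
  have "((\<lambda>u. - f u) has_derivative (\<lambda>h. - Df u \<bullet> h)) (at u)" for u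
    using has_derivative_minus[OF deriv[of u]] by simp
  moreover have "norm (- Df u - - Df v) \<le> L * norm (u - v)" for u v
    using lip[of u v] by (simp add: norm_minus_commute)
  ultimately have "- f y \<le> - f x + - Df x \<bullet> (y - x) + L / 2 * (norm (y - x))\<^sup>2"
    by (rule descent_lemma)
  with descent_lemma[OF deriv lip, of y x] show ?thesis
    unfolding abs_le_iff inner_minus_left by linarith
qed

lemma expected_descent_step:
  fixes f :: "'a::euclidean_space \<Rightarrow> real" and Df :: "'a \<Rightarrow> 'a" and g :: "'b \<Rightarrow> 'a"
  assumes "prob_space M"
    and deriv: "\<And>u. (f has_derivative (\<lambda>h. Df u \<bullet> h)) (at u)"
    and lip: "\<And>u v. norm (Df u - Df v) \<le> L * norm (u - v)"
    and g_int: "integrable M g" and g_sq_int: "integrable M (\<lambda>\<omega>. (norm (g \<omega>))\<^sup>2)"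
  shows "(\<integral>\<omega>. f (\<theta> - \<eta> *\<^sub>R g \<omega>) \<partial>M)
    \<le> f \<theta> - \<eta> * (Df \<theta> \<bullet> (\<integral>\<omega>. g \<omega> \<partial>M)) + L / 2 * \<eta>\<^sup>2 * (\<integral>\<omega>. (norm (g \<omega>))\<^sup>2 \<partial>M)"
proof -
  interpret prob_space M by fact
  define lin where "lin \<omega> = f \<theta> - \<eta> * (Df \<theta> \<bullet> g \<omega>)" for \<omega>
  have remainder: "\<bar>f (\<theta> - \<eta> *\<^sub>R g \<omega>) - lin \<omega>\<bar> \<le> L / 2 * \<eta>\<^sup>2 * (norm (g \<omega>))\<^sup>2" for \<omega>
    using abs_descent_lemma[OF deriv lip, of "\<theta> - \<eta> *\<^sub>R g \<omega>" \<theta>]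
    by (simp add: lin_def power_mult_distrib algebra_simps)
  have lin_int: "integrable M lin"
    unfolding lin_def by (intro Bochner_Integration.integrable_diff integrable_mult_right
        integrable_inner_right g_int integrable_const)
  have cont: "continuous_on UNIV f"
    by (rule has_derivative_continuous_on) (rule deriv)
  have "(\<lambda>\<omega>. \<theta> - \<eta> *\<^sub>R g \<omega>) \<in> borel_measurable M"
    using borel_measurable_integrable[OF g_int] by simp
  from measurable_compose[OF this borel_measurable_continuous_onI[OF cont]]
  have step_meas: "(\<lambda>\<omega>. f (\<theta> - \<eta> *\<^sub>R g \<omega>)) \<in> borel_measurable M" .
  have step_int: "integrable M (\<lambda>\<omega>. f (\<theta> - \<eta> *\<^sub>R g \<omega>))"
  proof (rule Bochner_Integration.integrable_bound[OF _ step_meas])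
    show "integrable M (\<lambda>\<omega>. \<bar>lin \<omega>\<bar> + \<bar>L\<bar> / 2 * \<eta>\<^sup>2 * (norm (g \<omega>))\<^sup>2)"
      by (intro Bochner_Integration.integrable_add integrable_abs integrable_mult_right lin_int g_sq_int)
    have "norm (f (\<theta> - \<eta> *\<^sub>R g \<omega>)) \<le> norm (\<bar>lin \<omega>\<bar> + \<bar>L\<bar> / 2 * \<eta>\<^sup>2 * (norm (g \<omega>))\<^sup>2)"
      for \<omega>
    proof -
      have "\<bar>f (\<theta> - \<eta> *\<^sub>R g \<omega>)\<bar> \<le> \<bar>lin \<omega>\<bar> + \<bar>f (\<theta> - \<eta> *\<^sub>R g \<omega>) - lin \<omega>\<bar>"
        using abs_triangle_ineq[of "lin \<omega>" "f (\<theta> - \<eta> *\<^sub>R g \<omega>) - lin \<omega>"] by simp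
      moreover have "L / 2 * \<eta>\<^sup>2 * (norm (g \<omega>))\<^sup>2 \<le> \<bar>L\<bar> / 2 * \<eta>\<^sup>2 * (norm (g \<omega>))\<^sup>2"
        by (intro mult_right_mono) auto
      moreover have "norm (\<bar>lin \<omega>\<bar> + \<bar>L\<bar> / 2 * \<eta>\<^sup>2 * (norm (g \<omega>))\<^sup>2)
          = \<bar>lin \<omega>\<bar> + \<bar>L\<bar> / 2 * \<eta>\<^sup>2 * (norm (g \<omega>))\<^sup>2"
        by simp
      ultimately show ?thesis
        using remainder[of \<omega>] by (simp only: real_norm_def)
    qed
    then show "AE \<omega> in M. norm (f (\<theta> - \<eta> *\<^sub>R g \<omega>))
        \<le> norm (\<bar>lin \<omega>\<bar> + \<bar>L\<bar> / 2 * \<eta>\<^sup>2 * (norm (g \<omega>))\<^sup>2)"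
      by simp
  qed
  have "(\<integral>\<omega>. f (\<theta> - \<eta> *\<^sub>R g \<omega>) \<partial>M) \<le> (\<integral>\<omega>. lin \<omega> + L / 2 * \<eta>\<^sup>2 * (norm (g \<omega>))\<^sup>2 \<partial>M)"
  proof (rule integral_mono[OF step_int])
    show "integrable M (\<lambda>\<omega>. lin \<omega> + L / 2 * \<eta>\<^sup>2 * (norm (g \<omega>))\<^sup>2)"
      by (intro Bochner_Integration.integrable_add integrable_mult_right lin_int g_sq_int)
    show "f (\<theta> - \<eta> *\<^sub>R g \<omega>) \<le> lin \<omega> + L / 2 * \<eta>\<^sup>2 * (norm (g \<omega>))\<^sup>2" for \<omega>
      using remainder[of \<omega>] by (simp only: abs_le_iff) linarith
  qed
  also have "\<dots> = f \<theta> - \<eta> * (Df \<theta> \<bullet> (\<integral>\<omega>. g \<omega> \<partial>M)) + L / 2 * \<eta>\<^sup>2 * (\<integral>\<omega>. (norm (g \<omega>))\<^sup>2 \<partial>M)"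
  proof -
    have "(\<integral>\<omega>. lin \<omega> \<partial>M) = f \<theta> - \<eta> * (Df \<theta> \<bullet> (\<integral>\<omega>. g \<omega> \<partial>M))"
      unfolding lin_def using g_int
      by (subst Bochner_Integration.integral_diff) (auto simp: integral_inner_right prob_space)
    then show ?thesis
      using lin_int g_sq_int by (subst Bochner_Integration.integral_add) auto
  qed
  finally show ?thesis .
qed

lemma lipschitz_constant_nonneg:
  fixes F :: "'a::euclidean_space \<Rightarrow> 'b::real_normed_vector"
  assumes "\<And>u v. norm (F u - F v) \<le> L * norm (u - v)"
  shows "0 \<le> L"
proof -
  obtain e :: 'a where "e \<in> Basis" using nonempty_Basis by blast
  with order_trans[OF norm_ge_zero assms[of 0 e]] show ?thesis by simp
qed

lemma
  fixes f :: "'x \<Rightarrow> 'b::{banach,second_countable_topology}"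
  assumes M: "\<And>i. i \<in> I \<Longrightarrow> prob_space (M i)" and i: "i \<in> I"
    and f: "f \<in> borel_measurable (M i)"
  shows integral_PiM_component: "(\<integral>\<omega>. f (\<omega> i) \<partial>PiM I M) = integral\<^sup>L (M i) f"
    and integrable_PiM_component_iff: "integrable (PiM I M) (\<lambda>\<omega>. f (\<omega> i)) \<longleftrightarrow> integrable (M i) f"
proof -
  have proj: "(\<lambda>\<omega>. \<omega> i) \<in> PiM I M \<rightarrow>\<^sub>M M i" using i by simp
  show "(\<integral>\<omega>. f (\<omega> i) \<partial>PiM I M) = integral\<^sup>L (M i) f"
    using integral_distr[OF proj f] distr_PiM_component[of I M i, OF M i] by simp
  show "integrable (PiM I M) (\<lambda>\<omega>. f (\<omega> i)) \<longleftrightarrow> integrable (M i) f"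
    using integrable_distr_eq[OF proj f] distr_PiM_component[of I M i, OF M i] by simp
qed

lemma
  fixes f h :: "'x \<Rightarrow> real"
  assumes M: "\<And>i. i \<in> I \<Longrightarrow> prob_space (M i)" and fin: "finite I"
    and i: "i \<in> I" and j: "j \<in> I" and ij: "i \<noteq> j"
    and f: "integrable (M i) f" and h: "integrable (M j) h"
  shows integral_PiM_components_mult:
      "(\<integral>\<omega>. f (\<omega> i) * h (\<omega> j) \<partial>PiM I M) = integral\<^sup>L (M i) f * integral\<^sup>L (M j) h"
    and integrable_PiM_components_mult: "integrable (PiM I M) (\<lambda>\<omega>. f (\<omega> i) * h (\<omega> j))"
proof -
  \<comment> \<open>product_sigma_finite needs a family indexed by the whole type, so M is extended outside I\<close>
  define M' where "M' k = (if k \<in> I then M k else return (count_space UNIV) undefined)" for k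
  have prob': "prob_space (M' k)" for k
    using M by (auto simp: M'_def intro: prob_space_return)
  interpret product_sigma_finite M'
    unfolding product_sigma_finite_def using prob' by (auto intro: prob_space_imp_sigma_finite)
  have PiM_eq: "PiM I M' = PiM I M" by (rule PiM_cong) (auto simp: M'_def)
  define F where "F k = (if k = i then f else if k = j then h else (\<lambda>_. 1))" for k
  have F_int: "integrable (M' k) (F k)" if "k \<in> I" for k
  proof -
    interpret prob_space "M k" using M that .
    show ?thesis using f h that by (auto simp: F_def M'_def)
  qed
  have prod_F: "(\<Prod>k\<in>I. F k (\<omega> k)) = f (\<omega> i) * h (\<omega> j)" for \<omega>
  proof -
    have "(\<Prod>k\<in>I. F k (\<omega> k)) = (\<Prod>k\<in>{i, j}. F k (\<omega> k))"
      by (rule prod.mono_neutral_right) (use fin i j in \<open>auto simp: F_def\<close>)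
    then show ?thesis using ij by (simp add: F_def)
  qed
  have prod_int_F: "(\<Prod>k\<in>I. integral\<^sup>L (M' k) (F k)) = integral\<^sup>L (M i) f * integral\<^sup>L (M j) h"
  proof -
    have "(\<Prod>k\<in>I. integral\<^sup>L (M' k) (F k)) = (\<Prod>k\<in>{i, j}. integral\<^sup>L (M' k) (F k))"
      by (rule prod.mono_neutral_right)
        (use fin i j prob_space.prob_space[OF prob'] in \<open>auto simp: F_def measure_def\<close>)
    then show ?thesis using ij i j by (simp add: F_def M'_def)
  qed
  show "(\<integral>\<omega>. f (\<omega> i) * h (\<omega> j) \<partial>PiM I M) = integral\<^sup>L (M i) f * integral\<^sup>L (M j) h"
    using product_integral_prod[OF fin F_int] prod_F prod_int_F PiM_eq by simp
  show "integrable (PiM I M) (\<lambda>\<omega>. f (\<omega> i) * h (\<omega> j))"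
    using product_integrable_prod[OF fin F_int] prod_F PiM_eq by simp
qed

lemma
  fixes X Y :: "'x \<Rightarrow> 'a::euclidean_space"
  assumes M: "\<And>i. i \<in> I \<Longrightarrow> prob_space (M i)" and fin: "finite I"
    and i: "i \<in> I" and j: "j \<in> I" and ij: "i \<noteq> j"
    and X: "integrable (M i) X" and Y: "integrable (M j) Y"
  shows integral_PiM_components_inner:
      "(\<integral>\<omega>. X (\<omega> i) \<bullet> Y (\<omega> j) \<partial>PiM I M) = integral\<^sup>L (M i) X \<bullet> integral\<^sup>L (M j) Y"
    and integrable_PiM_components_inner: "integrable (PiM I M) (\<lambda>\<omega>. X (\<omega> i) \<bullet> Y (\<omega> j))"
proof -
  have coord: "integrable (M i) (\<lambda>x. X x \<bullet> e)" "integrable (M j) (\<lambda>x. Y x \<bullet> e)" for e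
    by (intro integrable_inner_left X Y)+
  note mult = integral_PiM_components_mult[OF M fin i j ij coord]
    integrable_PiM_components_mult[OF M fin i j ij coord]
  have inner_eq: "(\<lambda>\<omega>. X (\<omega> i) \<bullet> Y (\<omega> j)) = (\<lambda>\<omega>. \<Sum>e\<in>Basis. (X (\<omega> i) \<bullet> e) * (Y (\<omega> j) \<bullet> e))"
    by (intro ext euclidean_inner)
  show "integrable (PiM I M) (\<lambda>\<omega>. X (\<omega> i) \<bullet> Y (\<omega> j))"
    unfolding inner_eq using mult by (intro Bochner_Integration.integrable_sum) blast
  have "(\<integral>\<omega>. X (\<omega> i) \<bullet> Y (\<omega> j) \<partial>PiM I M)
      = (\<Sum>e\<in>Basis. (\<integral>x. X x \<bullet> e \<partial>M i) * (\<integral>x. Y x \<bullet> e \<partial>M j))"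
    unfolding inner_eq using mult by (subst Bochner_Integration.integral_sum) auto
  also have "\<dots> = integral\<^sup>L (M i) X \<bullet> integral\<^sup>L (M j) Y"
    using X Y euclidean_inner[of "integral\<^sup>L (M i) X" "integral\<^sup>L (M j) Y"]
    by (simp add: integral_inner_left)
  finally show "(\<integral>\<omega>. X (\<omega> i) \<bullet> Y (\<omega> j) \<partial>PiM I M) = integral\<^sup>L (M i) X \<bullet> integral\<^sup>L (M j) Y" .
qed

lemma
  fixes Y :: "'i \<Rightarrow> 'x \<Rightarrow> 'a::euclidean_space" and v :: 'a
  assumes M: "\<And>i. i \<in> I \<Longrightarrow> prob_space (M i)" and fin: "finite I"
    and Y_int: "\<And>i. i \<in> I \<Longrightarrow> integrable (M i) (Y i)"
    and Y_mean: "\<And>i. i \<in> I \<Longrightarrow> integral\<^sup>L (M i) (Y i) = 0"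
    and Y_sq_int: "\<And>i. i \<in> I \<Longrightarrow> integrable (M i) (\<lambda>x. (norm (Y i x))\<^sup>2)"
  shows integrable_PiM_centered_sum: "integrable (PiM I M) (\<lambda>\<omega>. v + (\<Sum>i\<in>I. Y i (\<omega> i)))"
    and integral_PiM_centered_sum: "(\<integral>\<omega>. v + (\<Sum>i\<in>I. Y i (\<omega> i)) \<partial>PiM I M) = v"
    and integrable_PiM_centered_sum_sq:
      "integrable (PiM I M) (\<lambda>\<omega>. (norm (v + (\<Sum>i\<in>I. Y i (\<omega> i))))\<^sup>2)"
    and integral_PiM_centered_sum_sq:
      "(\<integral>\<omega>. (norm (v + (\<Sum>i\<in>I. Y i (\<omega> i))))\<^sup>2 \<partial>PiM I M)
        = (norm v)\<^sup>2 + (\<Sum>i\<in>I. \<integral>x. (norm (Y i x))\<^sup>2 \<partial>M i)"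
proof -
  interpret P: prob_space "PiM I M" by (rule prob_space_PiM) (rule M)
  have comp_int: "integrable (PiM I M) (\<lambda>\<omega>. Y i (\<omega> i))" if "i \<in> I" for i
    using integrable_PiM_component_iff[where I=I and M=M and i=i and f="Y i"] M that Y_int[OF that]
      borel_measurable_integrable[OF Y_int[OF that]] by blast
  have comp_mean: "(\<integral>\<omega>. Y i (\<omega> i) \<partial>PiM I M) = 0" if "i \<in> I" for i
    using integral_PiM_component[where I=I and M=M and i=i and f="Y i"] M that Y_mean[OF that]
      borel_measurable_integrable[OF Y_int[OF that]] by simp
  show "integrable (PiM I M) (\<lambda>\<omega>. v + (\<Sum>i\<in>I. Y i (\<omega> i)))"
    using comp_int by auto
  then show "(\<integral>\<omega>. v + (\<Sum>i\<in>I. Y i (\<omega> i)) \<partial>PiM I M) = v"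
    using comp_int comp_mean by (simp add: Bochner_Integration.integral_add P.prob_space)
  define cross where "cross \<omega> = (\<Sum>i\<in>I. \<Sum>j\<in>I. Y i (\<omega> i) \<bullet> Y j (\<omega> j))" for \<omega>
  have pair: "integrable (PiM I M) (\<lambda>\<omega>. Y i (\<omega> i) \<bullet> Y j (\<omega> j))
      \<and> (\<integral>\<omega>. Y i (\<omega> i) \<bullet> Y j (\<omega> j) \<partial>PiM I M) = (if i = j then \<integral>x. (norm (Y i x))\<^sup>2 \<partial>M i else 0)"
    if i: "i \<in> I" and j: "j \<in> I" for i j
  proof (cases "i = j")
    case True
    have "(\<lambda>x. (norm (Y i x))\<^sup>2) \<in> borel_measurable (M i)"
      using Y_sq_int[OF i] by measurable
    then have "integrable (PiM I M) (\<lambda>\<omega>. (norm (Y i (\<omega> i)))\<^sup>2)"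
        "(\<integral>\<omega>. (norm (Y i (\<omega> i)))\<^sup>2 \<partial>PiM I M) = (\<integral>x. (norm (Y i x))\<^sup>2 \<partial>M i)"
      using integrable_PiM_component_iff[where I=I and M=M and i=i and f="\<lambda>x. (norm (Y i x))\<^sup>2"]
        integral_PiM_component[where I=I and M=M and i=i and f="\<lambda>x. (norm (Y i x))\<^sup>2"]
        M i Y_sq_int[OF i] by blast+
    then show ?thesis using True by (simp add: dot_square_norm)
  next
    case False
    then show ?thesis
      using integral_PiM_components_inner[OF M fin i j False Y_int[OF i] Y_int[OF j]]
        integrable_PiM_components_inner[OF M fin i j False Y_int[OF i] Y_int[OF j]] Y_mean i j
      by simp
  qed
  have cross_int: "integrable (PiM I M) cross"
    unfolding cross_def using pair by (intro Bochner_Integration.integrable_sum) blast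
  have cross_integral: "integral\<^sup>L (PiM I M) cross = (\<Sum>i\<in>I. \<integral>x. (norm (Y i x))\<^sup>2 \<partial>M i)"
    unfolding cross_def using pair fin
    by (simp add: Bochner_Integration.integral_sum Bochner_Integration.integrable_sum sum.delta)
  have lin_int: "integrable (PiM I M) (\<lambda>\<omega>. v \<bullet> (\<Sum>i\<in>I. Y i (\<omega> i)))"
    using comp_int by auto
  have lin_integral: "(\<integral>\<omega>. v \<bullet> (\<Sum>i\<in>I. Y i (\<omega> i)) \<partial>PiM I M) = 0"
    using comp_int comp_mean by (simp add: integral_inner_right)
  have expand: "(norm (v + (\<Sum>i\<in>I. Y i (\<omega> i))))\<^sup>2
      = (norm v)\<^sup>2 + 2 * (v \<bullet> (\<Sum>i\<in>I. Y i (\<omega> i))) + cross \<omega>" for \<omega>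
    unfolding cross_def
    by (simp add: power2_norm_eq_inner inner_add_left inner_add_right inner_commute
        inner_sum_left inner_sum_right)
  show "integrable (PiM I M) (\<lambda>\<omega>. (norm (v + (\<Sum>i\<in>I. Y i (\<omega> i))))\<^sup>2)"
    unfolding expand using lin_int cross_int by auto
  show "(\<integral>\<omega>. (norm (v + (\<Sum>i\<in>I. Y i (\<omega> i))))\<^sup>2 \<partial>PiM I M)
      = (norm v)\<^sup>2 + (\<Sum>i\<in>I. \<integral>x. (norm (Y i x))\<^sup>2 \<partial>M i)"
    unfolding expand using lin_int cross_int lin_integral cross_integral
    by (simp add: Bochner_Integration.integral_add P.prob_space)
qed

lemma conflicted_weighted_inner_lower_bound:
  fixes G :: "nat \<Rightarrow> 'a::real_inner" and w :: "nat \<Rightarrow> real"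
  assumes w_pos: "\<And>k. k < K \<Longrightarrow> w k > 0" and c: "c \<ge> 0"
    and conflicted: "\<And>j k. j < K \<Longrightarrow> k < K \<Longrightarrow> j \<noteq> k \<Longrightarrow>
        G j \<bullet> G k \<ge> - c * ((norm (G j))\<^sup>2 + (norm (G k))\<^sup>2)"
    and \<beta>: "\<And>k. k < K \<Longrightarrow> \<beta> \<le> 1 + c * (- real K + 2 - (\<Sum>j<K. w j) / w k)"
  shows "(\<Sum>k<K. w k * \<beta> * (norm (G k))\<^sup>2) \<le> (\<Sum>j<K. G j) \<bullet> (\<Sum>k<K. w k *\<^sub>R G k)"
proof -
  define n where "n j = (norm (G j))\<^sup>2" for j
  define W where "W = (\<Sum>j<K. w j)"
  have "(\<Sum>k<K. w k * \<beta> * n k) \<le> (\<Sum>k<K. w k * (1 + c * (- real K + 2 - W / w k)) * n k)"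
    unfolding n_def W_def using w_pos \<beta>
    by (intro sum_mono mult_right_mono mult_left_mono) (auto intro: less_imp_le)
  also have "\<dots> = (\<Sum>k<K. w k * (1 + 2 * c) * n k - c * W * n k - c * real K * w k * n k)"
  proof (intro sum.cong refl)
    fix k assume "k \<in> {..<K}"
    with w_pos[of k] show "w k * (1 + c * (- real K + 2 - W / w k)) * n k
        = w k * (1 + 2 * c) * n k - c * W * n k - c * real K * w k * n k"
      by (simp add: field_simps)
  qed
  also have "\<dots> = (\<Sum>j<K. \<Sum>k<K. - c * w k * (n j + n k)
      + (if k = j then w j * (1 + 2 * c) * n j else 0))"
    by (simp add: sum.distrib sum_subtractf sum_distrib_left sum_distrib_right algebra_simps W_def)
  also have "\<dots> \<le> (\<Sum>j<K. \<Sum>k<K. w k * (G j \<bullet> G k))"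
  proof (intro sum_mono)
    fix j k assume j: "j \<in> {..<K}" and k: "k \<in> {..<K}"
    show "- c * w k * (n j + n k) + (if k = j then w j * (1 + 2 * c) * n j else 0)
        \<le> w k * (G j \<bullet> G k)"
    proof (cases "k = j")
      case True
      then show ?thesis by (simp add: n_def power2_norm_eq_inner algebra_simps)
    next
      case False
      have "w k * (- c * (n j + n k)) \<le> w k * (G j \<bullet> G k)"
        using conflicted[of j k] j k False w_pos[of k] unfolding n_def
        by (intro mult_left_mono) auto
      with False show ?thesis by (simp add: algebra_simps)
    qed
  qed
  also have "\<dots> = (\<Sum>j<K. G j) \<bullet> (\<Sum>k<K. w k *\<^sub>R G k)"
    by (simp add: inner_sum_left inner_sum_right sum_distrib_left) (rule sum.swap)
  finally show ?thesis unfolding n_def .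
qed

lemma aligned_norm_weighted_sum_upper_bound:
  fixes G :: "nat \<Rightarrow> 'a::real_inner" and w :: "nat \<Rightarrow> real"
  assumes w_nonneg: "\<And>k. k < K \<Longrightarrow> w k \<ge> 0" and c: "c \<ge> 0"
    and aligned: "\<And>j k. j < K \<Longrightarrow> k < K \<Longrightarrow> j \<noteq> k \<Longrightarrow>
        G j \<bullet> G k \<le> c * norm (G j) * norm (G k)"
  shows "(norm (\<Sum>k<K. w k *\<^sub>R G k))\<^sup>2 \<le> (1 + c * (real K - 1)) * (\<Sum>k<K. (w k)\<^sup>2 * (norm (G k))\<^sup>2)"
proof -
  define n where "n j = (w j)\<^sup>2 * (norm (G j))\<^sup>2" for j
  have "(norm (\<Sum>k<K. w k *\<^sub>R G k))\<^sup>2 = (\<Sum>j<K. \<Sum>k<K. w j * w k * (G j \<bullet> G k))"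
    by (simp add: power2_norm_eq_inner inner_sum_left inner_sum_right sum_distrib_left)
       (subst sum.swap, simp add: algebra_simps inner_commute)
  also have "\<dots> \<le> (\<Sum>j<K. \<Sum>k<K. c / 2 * n j + c / 2 * n k + (if k = j then (1 - c) * n j else 0))"
  proof (intro sum_mono)
    fix j k assume j: "j \<in> {..<K}" and k: "k \<in> {..<K}"
    show "w j * w k * (G j \<bullet> G k) \<le> c / 2 * n j + c / 2 * n k + (if k = j then (1 - c) * n j else 0)"
    proof (cases "k = j")
      case True
      then show ?thesis by (simp add: n_def dot_square_norm algebra_simps power2_eq_square)
    next
      case False
      have "w j * w k * (G j \<bullet> G k) \<le> w j * w k * (c * norm (G j) * norm (G k))"
        using aligned[of j k] j k False w_nonneg[of j] w_nonneg[of k] by (intro mult_left_mono) auto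
      also have "\<dots> = c * ((w j * norm (G j)) * (w k * norm (G k)))" by (simp add: algebra_simps)
      also have "\<dots> \<le> c * (((w j * norm (G j))\<^sup>2 + (w k * norm (G k))\<^sup>2) / 2)"
        using c sum_squares_bound[of "w j * norm (G j)" "w k * norm (G k)"]
        by (intro mult_left_mono) auto
      finally show ?thesis using False by (simp add: n_def algebra_simps power_mult_distrib)
    qed
  qed
  also have "\<dots> = (\<Sum>j<K. real K * (c / 2) * n j) + (\<Sum>j<K. \<Sum>k<K. c / 2 * n k)
      + (\<Sum>j<K. (1 - c) * n j)"
    by (simp add: sum.distrib mult.assoc)
  also have "\<dots> = (1 + c * (real K - 1)) * (\<Sum>k<K. n k)"
  proof -
    have s1: "(\<Sum>j<K. real K * (c / 2) * n j) = real K * (c / 2) * (\<Sum>k<K. n k)"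
      and s2: "(\<Sum>j<K. \<Sum>k<K. c / 2 * n k) = real K * (c / 2 * (\<Sum>k<K. n k))"
      and s3: "(\<Sum>j<K. (1 - c) * n j) = (1 - c) * (\<Sum>k<K. n k)"
      by (simp_all add: sum_distrib_left)
    show ?thesis unfolding s1 s2 s3 by (simp add: algebra_simps)
  qed
  finally show ?thesis by (simp add: n_def)
qed

lemma batch_index_eq_Sigma: "batch_index K b = Sigma {..<K} (\<lambda>k. {..<b k})"
  by (auto simp: batch_index_def)

lemma sum_batch_index_fst:
  fixes f :: "nat \<Rightarrow> 'v::real_vector"
  shows "(\<Sum>a\<in>batch_index K b. f (fst a)) = (\<Sum>k<K. real (b k) *\<^sub>R f k)"
proof -
  have "(\<Sum>a\<in>batch_index K b. f (fst a)) = (\<Sum>k<K. \<Sum>i<b k. f k)"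
    by (simp add: batch_index_eq_Sigma sum.Sigma split_beta')
  then show ?thesis by (simp add: sum_constant_scaleR)
qed

lemma batch_measure_eq_PiM: "batch_measure K b D = PiM (batch_index K b) (\<lambda>a. D (fst a))"
  by (simp add: batch_measure_def split_beta')

lemma mix_batch_grad_eq_centered:
  fixes G :: "nat \<Rightarrow> 'a::real_vector"
  shows "mix_batch_grad K b gl \<theta> \<omega> = (1 / real (\<Sum>k<K. b k)) *\<^sub>R
      ((\<Sum>k<K. real (b k) *\<^sub>R G k) + (\<Sum>a\<in>batch_index K b. gl (fst a) \<theta> (\<omega> a) - G (fst a)))"
proof -
  have "(\<Sum>k<K. \<Sum>i<b k. gl k \<theta> (\<omega> (k, i))) = (\<Sum>a\<in>batch_index K b. gl (fst a) \<theta> (\<omega> a))"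
    by (simp add: batch_index_eq_Sigma sum.Sigma split_beta)
  also have "\<dots> = (\<Sum>k<K. real (b k) *\<^sub>R G k) + (\<Sum>a\<in>batch_index K b. gl (fst a) \<theta> (\<omega> a) - G (fst a))"
    by (simp add: sum_subtractf sum_batch_index_fst)
  finally show ?thesis by (simp add: mix_batch_grad_def)
qed

lemma
  fixes gl :: "nat \<Rightarrow> 'a \<Rightarrow> 'x \<Rightarrow> 'a::euclidean_space" and G :: "nat \<Rightarrow> 'a"
  assumes prob: "\<And>k. k < K \<Longrightarrow> prob_space (D k)"
    and gl_int: "\<And>k. k < K \<Longrightarrow> integrable (D k) (gl k \<theta>)"
    and unbiased: "\<And>k. k < K \<Longrightarrow> (\<integral>x. gl k \<theta> x \<partial>D k) = G k"
    and var_int: "\<And>k. k < K \<Longrightarrow> integrable (D k) (\<lambda>x. (norm (gl k \<theta> x - G k))\<^sup>2)"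
  shows integrable_mix_batch_grad: "integrable (batch_measure K b D) (mix_batch_grad K b gl \<theta>)"
    and integral_mix_batch_grad: "(\<integral>\<omega>. mix_batch_grad K b gl \<theta> \<omega> \<partial>batch_measure K b D)
      = (1 / real (\<Sum>k<K. b k)) *\<^sub>R (\<Sum>k<K. real (b k) *\<^sub>R G k)"
    and integrable_mix_batch_grad_sq:
      "integrable (batch_measure K b D) (\<lambda>\<omega>. (norm (mix_batch_grad K b gl \<theta> \<omega>))\<^sup>2)"
    and integral_mix_batch_grad_sq: "(\<integral>\<omega>. (norm (mix_batch_grad K b gl \<theta> \<omega>))\<^sup>2 \<partial>batch_measure K b D)
      = ((norm (\<Sum>k<K. real (b k) *\<^sub>R G k))\<^sup>2
          + (\<Sum>k<K. real (b k) * (\<integral>x. (norm (gl k \<theta> x - G k))\<^sup>2 \<partial>D k)))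
        / (real (\<Sum>k<K. b k))\<^sup>2"
proof -
  define I where "I = batch_index K b"
  define Z :: "nat \<Rightarrow> 'x \<Rightarrow> 'a" where "Z k x = gl k \<theta> x - G k" for k x
  define v where "v = (\<Sum>k<K. real (b k) *\<^sub>R G k)"
  define s where "s = 1 / real (\<Sum>k<K. b k)"
  have Z_int: "integrable (D k) (Z k)" and Z_mean: "integral\<^sup>L (D k) (Z k) = 0" if "k < K" for k
  proof -
    interpret prob_space "D k" using prob that .
    show "integrable (D k) (Z k)"
      using gl_int[OF that] unfolding Z_def[abs_def] by simp
    show "integral\<^sup>L (D k) (Z k) = 0"
      using gl_int[OF that] unbiased[OF that] unfolding Z_def[abs_def] by (simp add: prob_space)
  qed
  have I_fst: "fst a < K" if "a \<in> I" for a
    using that by (auto simp: I_def batch_index_def)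
  have hyps: "\<And>a. a \<in> I \<Longrightarrow> prob_space (D (fst a))"
    "\<And>a. a \<in> I \<Longrightarrow> integrable (D (fst a)) (Z (fst a))"
    "\<And>a. a \<in> I \<Longrightarrow> integral\<^sup>L (D (fst a)) (Z (fst a)) = 0"
    "\<And>a. a \<in> I \<Longrightarrow> integrable (D (fst a)) (\<lambda>x. (norm (Z (fst a) x))\<^sup>2)"
    using I_fst prob Z_int Z_mean var_int by (auto simp: Z_def)
  have fin: "finite I" by (simp add: I_def batch_index_eq_Sigma)
  note centered = integrable_PiM_centered_sum integral_PiM_centered_sum
    integrable_PiM_centered_sum_sq integral_PiM_centered_sum_sq
  note centered = centered[where I=I and M="\<lambda>a. D (fst a)" and Y="\<lambda>a. Z (fst a)" and v=v,
      OF hyps(1) fin hyps(2-4)]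
  have g_eq: "mix_batch_grad K b gl \<theta> = (\<lambda>\<omega>. s *\<^sub>R (v + (\<Sum>a\<in>I. Z (fst a) (\<omega> a))))"
    by (intro ext) (simp add: mix_batch_grad_eq_centered[where G=G] s_def v_def I_def Z_def)
  have g_sq_eq: "(\<lambda>\<omega>. (norm (mix_batch_grad K b gl \<theta> \<omega>))\<^sup>2)
      = (\<lambda>\<omega>. s\<^sup>2 * (norm (v + (\<Sum>a\<in>I. Z (fst a) (\<omega> a))))\<^sup>2)"
    by (simp add: g_eq power_mult_distrib)
  have P: "batch_measure K b D = PiM I (\<lambda>a. D (fst a))"
    unfolding batch_measure_eq_PiM I_def ..
  have var_sum: "(\<Sum>a\<in>I. \<integral>x. (norm (Z (fst a) x))\<^sup>2 \<partial>D (fst a))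
      = (\<Sum>k<K. real (b k) * (\<integral>x. (norm (gl k \<theta> x - G k))\<^sup>2 \<partial>D k))"
    using sum_batch_index_fst[where f="\<lambda>k. \<integral>x. (norm (gl k \<theta> x - G k))\<^sup>2 \<partial>D k"]
    by (simp add: I_def Z_def)
  show "integrable (batch_measure K b D) (mix_batch_grad K b gl \<theta>)"
    unfolding P g_eq using centered by simp
  show "(\<integral>\<omega>. mix_batch_grad K b gl \<theta> \<omega> \<partial>batch_measure K b D)
      = (1 / real (\<Sum>k<K. b k)) *\<^sub>R (\<Sum>k<K. real (b k) *\<^sub>R G k)"
    unfolding P g_eq using centered by (simp add: s_def v_def)
  show "integrable (batch_measure K b D) (\<lambda>\<omega>. (norm (mix_batch_grad K b gl \<theta> \<omega>))\<^sup>2)"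
    unfolding P g_sq_eq using centered by simp
  show "(\<integral>\<omega>. (norm (mix_batch_grad K b gl \<theta> \<omega>))\<^sup>2 \<partial>batch_measure K b D)
      = ((norm (\<Sum>k<K. real (b k) *\<^sub>R G k))\<^sup>2
          + (\<Sum>k<K. real (b k) * (\<integral>x. (norm (gl k \<theta> x - G k))\<^sup>2 \<partial>D k)))
        / (real (\<Sum>k<K. b k))\<^sup>2"
    unfolding P g_sq_eq using centered var_sum by (simp add: s_def v_def power_divide)
qed

lemma prob_space_batch_measure:
  assumes "\<And>k. k < K \<Longrightarrow> prob_space (D k)"
  shows "prob_space (batch_measure K b D)"
  unfolding batch_measure_eq_PiM
  by (rule prob_space_PiM) (use assms in \<open>auto simp: batch_index_def\<close>)

lemma has_derivative_total_loss:
  assumes "\<And>k. k < K \<Longrightarrow> (task_loss D l k has_derivative (\<lambda>h. G k u \<bullet> h)) (at u)"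
  shows "(total_loss K D l has_derivative (\<lambda>h. (\<Sum>k<K. G k u) \<bullet> h)) (at u)"
  using has_derivative_sum[of "{..<K}" "\<lambda>k. task_loss D l k" "\<lambda>k h. G k u \<bullet> h"] assms
  by (simp add: total_loss_def[abs_def] inner_sum_left)

theorem theorem1:
  fixes K :: nat and b :: "nat \<Rightarrow> nat"
    and D :: "nat \<Rightarrow> 'x measure"
    and l :: "nat \<Rightarrow> 'a::euclidean_space \<Rightarrow> 'x \<Rightarrow> real"
    and gl :: "nat \<Rightarrow> 'a \<Rightarrow> 'x \<Rightarrow> 'a"
    and G :: "nat \<Rightarrow> 'a \<Rightarrow> 'a"
    and Lip \<eta> c_lo c_hi :: real and \<sigma> :: "nat \<Rightarrow> real" and \<theta> :: 'a
  assumes K2: "K \<ge> 2"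
    and b_pos: "\<And>k. k < K \<Longrightarrow> b k > 0"
    and eta_pos: "\<eta> > 0"
    and prob: "\<And>k. k < K \<Longrightarrow> prob_space (D k)"
    \<comment> \<open>the loss is integrable (so L_k is defined) and differentiable in theta with gradient gl\<close>
    and l_int: "\<And>k u. k < K \<Longrightarrow> integrable (D k) (l k u)"
    and l_grad: "\<And>k u x. k < K \<Longrightarrow>
        ((\<lambda>u'. l k u' x) has_derivative (\<lambda>h. gl k u x \<bullet> h)) (at u)"
    \<comment> \<open>G k is the gradient of L_k\<close>
    and L_grad: "\<And>k u. k < K \<Longrightarrow>
        (task_loss D l k has_derivative (\<lambda>h. G k u \<bullet> h)) (at u)"
    \<comment> \<open>Lipschitz gradients (total and per task)\<close>
    and Lip_total: "\<And>u u'. norm ((\<Sum>k<K. G k u) - (\<Sum>k<K. G k u')) \<le> Lip * norm (u - u')"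
    and Lip_task: "\<And>k u u'. k < K \<Longrightarrow> norm (G k u - G k u') \<le> Lip * norm (u - u')"
    \<comment> \<open>unbiased stochastic gradients\<close>
    and unbiased_int: "\<And>k u. k < K \<Longrightarrow> integrable (D k) (gl k u)"
    and unbiased: "\<And>k u. k < K \<Longrightarrow> (\<integral>x. gl k u x \<partial>(D k)) = G k u"
    \<comment> \<open>bounded variance\<close>
    and var_int: "\<And>k u. k < K \<Longrightarrow> integrable (D k) (\<lambda>x. (norm (gl k u x - G k u))\<^sup>2)"
    and var_bound: "\<And>k u. k < K \<Longrightarrow> (\<integral>x. (norm (gl k u x - G k u))\<^sup>2 \<partial>(D k)) \<le> (\<sigma> k)\<^sup>2"
    \<comment> \<open>c_lo-conflicted and c_hi-aligned at theta\<close>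
    and c_lo_nn: "c_lo \<ge> 0" and c_hi_nn: "c_hi \<ge> 0"
    and conflicted: "\<And>j k. j < K \<Longrightarrow> k < K \<Longrightarrow> j \<noteq> k \<Longrightarrow>
        G j \<theta> \<bullet> G k \<theta> \<ge> - c_lo * ((norm (G j \<theta>))\<^sup>2 + (norm (G k \<theta>))\<^sup>2)"
    and aligned: "\<And>j k. j < K \<Longrightarrow> k < K \<Longrightarrow> j \<noteq> k \<Longrightarrow>
        G j \<theta> \<bullet> G k \<theta> \<le> c_hi * norm (G j \<theta>) * norm (G k \<theta>)"
    and c_lo_small: "\<And>k. k < K \<Longrightarrow>
        c_lo < 1 / (real K - 2 + real (\<Sum>j<K. b j) / real (b k))"
  shows "(\<integral>\<omega>. total_loss K D l (\<theta> - \<eta> *\<^sub>R mix_batch_grad K b gl \<theta> \<omega>) \<partial>(batch_measure K b D))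
    \<le> total_loss K D l \<theta>
      + (\<Sum>k<K. real (b k) *
          (- \<eta> / real (\<Sum>j<K. b j)
               * (MIN k\<in>{..<K}. 1 + c_lo * (- real K + 2 - real (\<Sum>j<K. b j) / real (b k)))
               * (norm (G k \<theta>))\<^sup>2
           + Lip * \<eta>\<^sup>2 / (2 * (real (\<Sum>j<K. b j))\<^sup>2) * (\<sigma> k)\<^sup>2))
      + (\<Sum>k<K. (real (b k))\<^sup>2 * (Lip * \<eta>\<^sup>2 / (2 * (real (\<Sum>j<K. b j))\<^sup>2))
           * (1 + c_hi * (real K - 1)) * (norm (G k \<theta>))\<^sup>2)"
proof -
  \<comment> \<open>c_lo_small only makes the constant \<beta> below nonnegative; the inequality does not need it.\<close>
  define B where "B = real (\<Sum>j<K. b j)"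
  define v where "v = (\<Sum>k<K. real (b k) *\<^sub>R G k \<theta>)"
  define n where "n k = (norm (G k \<theta>))\<^sup>2" for k
  define V where "V = (\<Sum>k<K. real (b k) * (\<integral>x. (norm (gl k \<theta> x - G k \<theta>))\<^sup>2 \<partial>D k))"
  define \<beta> where "\<beta> = (MIN k\<in>{..<K}. 1 + c_lo * (- real K + 2 - B / real (b k)))"
  define \<gamma> where "\<gamma> = 1 + c_hi * (real K - 1)"
  define C where "C = Lip * \<eta>\<^sup>2 / (2 * B\<^sup>2)"
  have B_pos: "B > 0"
    unfolding B_def of_nat_sum using K2 b_pos by (intro sum_pos) (auto simp: lessThan_empty_iff)
  have Lip_nonneg: "0 \<le> Lip"
    using K2 by (intro lipschitz_constant_nonneg[of "G 0"] Lip_task) simp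
  have batch_prob: "prob_space (batch_measure K b D)"
    by (rule prob_space_batch_measure) (rule prob)
  have loss_deriv: "(total_loss K D l has_derivative (\<lambda>h. (\<Sum>k<K. G k u) \<bullet> h)) (at u)" for u
    by (rule has_derivative_total_loss) (rule L_grad)
  note moments = integrable_mix_batch_grad integral_mix_batch_grad
    integrable_mix_batch_grad_sq integral_mix_batch_grad_sq
  note moments = moments[where K=K and D=D and gl=gl and \<theta>=\<theta> and G="\<lambda>k. G k \<theta>" and b=b,
      OF prob unbiased_int unbiased var_int]
  have "(\<integral>\<omega>. total_loss K D l (\<theta> - \<eta> *\<^sub>R mix_batch_grad K b gl \<theta> \<omega>) \<partial>batch_measure K b D)
      \<le> total_loss K D l \<theta> - \<eta> / B * ((\<Sum>k<K. G k \<theta>) \<bullet> v) + C * ((norm v)\<^sup>2 + V)"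
    using expected_descent_step[OF batch_prob loss_deriv Lip_total
        moments(1) moments(3), of \<theta> \<eta>] moments(2,4)
    by (simp add: B_def v_def V_def C_def)
  also have "\<dots> \<le> total_loss K D l \<theta> - \<eta> / B * (\<Sum>k<K. real (b k) * \<beta> * n k)
      + C * (\<gamma> * (\<Sum>k<K. (real (b k))\<^sup>2 * n k) + (\<Sum>k<K. real (b k) * (\<sigma> k)\<^sup>2))"
  proof -
    have "\<beta> \<le> 1 + c_lo * (- real K + 2 - (\<Sum>j<K. real (b j)) / real (b k))" if "k < K" for k
      using that unfolding \<beta>_def B_def of_nat_sum by (intro Min_le) auto
    then have "(\<Sum>k<K. real (b k) * \<beta> * n k) \<le> (\<Sum>k<K. G k \<theta>) \<bullet> v"
      unfolding n_def v_def using b_pos c_lo_nn conflicted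
      by (intro conflicted_weighted_inner_lower_bound) auto
    moreover have "(norm v)\<^sup>2 \<le> \<gamma> * (\<Sum>k<K. (real (b k))\<^sup>2 * n k)"
      unfolding n_def v_def \<gamma>_def using c_hi_nn aligned
      by (intro aligned_norm_weighted_sum_upper_bound) auto
    moreover have "V \<le> (\<Sum>k<K. real (b k) * (\<sigma> k)\<^sup>2)"
      unfolding V_def using var_bound by (intro sum_mono mult_left_mono) auto
    moreover have "0 < \<eta> / B" "0 \<le> C"
      using eta_pos B_pos Lip_nonneg by (auto simp: C_def)
    ultimately show ?thesis
      by (smt (verit) mult_left_mono)
  qed
  also have "\<dots> = total_loss K D l \<theta>
      + (\<Sum>k<K. real (b k) * (- \<eta> / B * \<beta> * n k + C * (\<sigma> k)\<^sup>2))
      + (\<Sum>k<K. (real (b k))\<^sup>2 * C * \<gamma> * n k)"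
    by (simp add: sum_distrib_left ring_distribs sum.distrib sum_subtractf mult_ac)
  finally show ?thesis
    unfolding B_def \<beta>_def \<gamma>_def C_def n_def .
qed

end
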